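(* Let $\mathfrak f_3$ be the Lie algebra with basis $e_1,e_2,e_3,\alpha,\beta,\gamma$, brackets $[e_1,e_2]=\alpha$, $[e_2,e_3]=\beta$, $[e_3,e_1]=\gamma$, and $\alpha,\beta,\gamma$ central; let $\mathfrak z=\mathrm{span}(\alpha,\beta,\gamma)$. Consider linear maps $\delta:\mathfrak f_3\to\Lambda^2\mathfrak f_3$ with $\delta(\mathfrak z)=0$ and $\delta(e_i)=e_i\wedge A_i+\omega_i$ ($i=1,2,3$) for some $A_i\in\mathfrak z$, $\omega_i\in\Lambda^2\mathfrak z$. Such a $\delta$ is a Lie bialgebra structure if and only if there exist $a,b,c\in k$ with $A_1=a\alpha+b\beta+c\gamma$, $A_2=a\alpha-b\beta-c\gamma$, $A_3=-a\alpha-b\beta+c\gamma$, and $\omega_i\wedge A_i=0$ in $\Lambda^3\mathfrak z$ for $i=1,2,3$.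
   Context: The field $k$ has characteristic zero. A Lie bialgebra structure is a linear $\delta:\mathfrak g\to\Lambda^2\mathfrak g$ satisfying co-Jacobi (in Sweedler notation $\delta(x)=x_1\wedge x_2$: $\delta(x_1)\wedge x_2-x_1\wedge\delta(x_2)=0$ in $\Lambda^3\mathfrak g$) and the 1-cocycle condition $\delta[x,y]=[\delta x,y]+[x,\delta y]$ for the adjoint action on $\Lambda^2\mathfrak g$. *)

theory Defs
  imports Main
begin

text \<open>The exterior powers are
identified with alternating tensors: an element of Lambda^2 is an alternating function
'i \<Rightarrow> 'i \<Rightarrow> 'k, with x \<and> y = x \<otimes> y - y \<otimes> x; an element of Lambda^3 is an alternating
function 'i \<Rightarrow> 'i \<Rightarrow> 'i \<Rightarrow> 'k (full antisymmetrisation).\<close>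

definition bas :: "'i \<Rightarrow> 'i \<Rightarrow> 'k::zero_neq_one" where
  "bas i = (\<lambda>j. if j = i then 1 else 0)"

definition alternating2 :: "('i \<Rightarrow> 'i \<Rightarrow> 'k::comm_ring) \<Rightarrow> bool" where
  "alternating2 w \<longleftrightarrow> (\<forall>i j. w i j = - w j i) \<and> (\<forall>i. w i i = 0)"

definition wedge2 :: "('i \<Rightarrow> 'k::comm_ring) \<Rightarrow> ('i \<Rightarrow> 'k) \<Rightarrow> ('i \<Rightarrow> 'i \<Rightarrow> 'k)" where
  "wedge2 x y = (\<lambda>i j. x i * y j - x j * y i)"

text \<open>wedge of an element of Lambda^2 with a vector, an element of Lambda^3
  (note x \<and> w = w \<and> x for w of degree 2)\<close>
definition wedge21 :: "('i \<Rightarrow> 'i \<Rightarrow> 'k::comm_ring) \<Rightarrow> ('i \<Rightarrow> 'k) \<Rightarrow> ('i \<Rightarrow> 'i \<Rightarrow> 'i \<Rightarrow> 'k)" where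
  "wedge21 w x = (\<lambda>i j k. w i j * x k + w j k * x i + w k i * x j)"

text \<open>Adjoint action of x on Lambda^2 g: x.(u \<and> v) = [x,u] \<and> v + u \<and> [x,v]\<close>
definition act2 :: "(('i::finite \<Rightarrow> 'k::comm_ring_1) \<Rightarrow> ('i \<Rightarrow> 'k) \<Rightarrow> ('i \<Rightarrow> 'k))
    \<Rightarrow> ('i \<Rightarrow> 'k) \<Rightarrow> ('i \<Rightarrow> 'i \<Rightarrow> 'k) \<Rightarrow> ('i \<Rightarrow> 'i \<Rightarrow> 'k)" where
  "act2 br x w = (\<lambda>k l. (\<Sum>i\<in>UNIV. br x (bas i) k * w i l) + (\<Sum>j\<in>UNIV. br x (bas j) l * w k j))"

definition linear_cobracket :: "(('i \<Rightarrow> 'k::comm_ring) \<Rightarrow> ('i \<Rightarrow> 'i \<Rightarrow> 'k)) \<Rightarrow> bool" where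
  "linear_cobracket d \<longleftrightarrow> (\<forall>x y. d (\<lambda>i. x i + y i) = (\<lambda>k l. d x k l + d y k l)) \<and>
      (\<forall>c x. d (\<lambda>i. c * x i) = (\<lambda>k l. c * d x k l))"

text \<open>co-Jacobi: writing d(x) = sum_{i<j} d(x)_{ij} b_i \<and> b_j, the Sweedler expression
  d(x_1) \<and> x_2 - x_1 \<and> d(x_2) equals (1/2) of the double sum below (it is symmetric
  in i,j); so its vanishing is equivalent.\<close>
definition cojacobi :: "(('i::finite \<Rightarrow> 'k::comm_ring_1) \<Rightarrow> ('i \<Rightarrow> 'i \<Rightarrow> 'k)) \<Rightarrow> bool" where
  "cojacobi d \<longleftrightarrow> (\<forall>x. (\<lambda>p q r. \<Sum>i\<in>UNIV. \<Sum>j\<in>UNIV.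
       d x i j * (wedge21 (d (bas i)) (bas j) p q r - wedge21 (d (bas j)) (bas i) p q r))
     = (\<lambda>p q r. 0))"

definition cocycle :: "(('i::finite \<Rightarrow> 'k::comm_ring_1) \<Rightarrow> ('i \<Rightarrow> 'k) \<Rightarrow> ('i \<Rightarrow> 'k))
    \<Rightarrow> (('i \<Rightarrow> 'k) \<Rightarrow> ('i \<Rightarrow> 'i \<Rightarrow> 'k)) \<Rightarrow> bool" where
  "cocycle br d \<longleftrightarrow> (\<forall>x y. d (br x y) = (\<lambda>k l. act2 br x (d y) k l - act2 br y (d x) k l))"

definition lie_bialgebra_structure :: "(('i::finite \<Rightarrow> 'k::comm_ring_1) \<Rightarrow> ('i \<Rightarrow> 'k) \<Rightarrow> ('i \<Rightarrow> 'k))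
    \<Rightarrow> (('i \<Rightarrow> 'k) \<Rightarrow> ('i \<Rightarrow> 'i \<Rightarrow> 'k)) \<Rightarrow> bool" where
  "lie_bialgebra_structure br d \<longleftrightarrow>
     linear_cobracket d \<and> (\<forall>x. alternating2 (d x)) \<and> cojacobi d \<and> cocycle br d"

datatype f3idx = E1 | E2 | E3 | Al | Be | Ga

lemma UNIV_f3idx: "(UNIV :: f3idx set) = {E1, E2, E3, Al, Be, Ga}"
  using f3idx.exhaust by auto

instance f3idx :: finite
  by standard (simp add: UNIV_f3idx)

definition br_f3 :: "(f3idx \<Rightarrow> 'k::comm_ring) \<Rightarrow> (f3idx \<Rightarrow> 'k) \<Rightarrow> (f3idx \<Rightarrow> 'k)" where
  "br_f3 x y = (\<lambda>k. case k of
      Al \<Rightarrow> x E1 * y E2 - x E2 * y E1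
    | Be \<Rightarrow> x E2 * y E3 - x E3 * y E2
    | Ga \<Rightarrow> x E3 * y E1 - x E1 * y E3
    | _ \<Rightarrow> 0)"

definition in_z :: "(f3idx \<Rightarrow> 'k::zero) \<Rightarrow> bool" where
  "in_z A \<longleftrightarrow> A E1 = 0 \<and> A E2 = 0 \<and> A E3 = 0"

definition in_L2z :: "(f3idx \<Rightarrow> f3idx \<Rightarrow> 'k::comm_ring) \<Rightarrow> bool" where
  "in_L2z w \<longleftrightarrow> alternating2 w \<and> (\<forall>i j. i \<in> {E1, E2, E3} \<longrightarrow> w i j = 0)"

definition delta_f3 :: "(f3idx \<Rightarrow> 'k::comm_ring_1) \<Rightarrow> (f3idx \<Rightarrow> 'k) \<Rightarrow> (f3idx \<Rightarrow> 'k)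
    \<Rightarrow> (f3idx \<Rightarrow> f3idx \<Rightarrow> 'k) \<Rightarrow> (f3idx \<Rightarrow> f3idx \<Rightarrow> 'k) \<Rightarrow> (f3idx \<Rightarrow> f3idx \<Rightarrow> 'k)
    \<Rightarrow> (f3idx \<Rightarrow> 'k) \<Rightarrow> (f3idx \<Rightarrow> f3idx \<Rightarrow> 'k)" where
  "delta_f3 A1 A2 A3 w1 w2 w3 x = (\<lambda>k l.
       x E1 * (wedge2 (bas E1) A1 k l + w1 k l)
     + x E2 * (wedge2 (bas E2) A2 k l + w2 k l)
     + x E3 * (wedge2 (bas E3) A3 k l + w3 k l))"

end

theory Submission
  imports Defs
begin

(* Since delta vanishes on z = [f3, f3], the cocycle condition reduces to the symmetry
   x.delta(y) = y.delta(x); evaluated on pairs of generators e_i, e_j it becomes a system of sign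
   relations between the coordinates of A1, A2, A3, which is exactly the stated shape.  For
   co-Jacobi, antisymmetry of delta(x) makes the Sweedler sum twice sum_i delta(b_i) /\ delta(x)_i;
   the only nonzero rows of delta(x) are x_i A_i, and (e_i /\ A_i) /\ A_i = 0, so what remains is
   2 sum_i x_i w_i /\ A_i, which vanishes for all x iff each w_i /\ A_i does. *)

lemma all_f3idx: "(\<forall>p::f3idx. P p) \<longleftrightarrow> P E1 \<and> P E2 \<and> P E3 \<and> P Al \<and> P Be \<and> P Ga"
  by (metis f3idx.exhaust)

lemma sum_f3idx: "(\<Sum>i\<in>UNIV. f i) = f E1 + f E2 + f E3 + f Al + f Be + f Ga"
  by (simp add: UNIV_f3idx algebra_simps)

lemma wedge21_sum_bas:
  fixes c :: "'i::finite \<Rightarrow> 'k::comm_ring_1"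
  shows "(\<Sum>j\<in>UNIV. c j * wedge21 w (bas j) p q r) = wedge21 w c p q r"
proof -
  have coord: "(\<Sum>j\<in>UNIV. c j * (if r = j then 1 else 0)) = c r" for r
    by (simp add: if_distrib cong: if_cong)
  show ?thesis
    unfolding wedge21_def bas_def
    by (simp add: distrib_left sum.distrib mult.left_commute[of "c _"]
        sum_distrib_left[symmetric] coord)
qed

lemma wedge21_wedge2_add_same:
  "wedge21 (\<lambda>i j. wedge2 u A i j + w i j) (\<lambda>j. c * A j) p q r = c * wedge21 w A p q r"
  unfolding wedge21_def wedge2_def by (simp add: algebra_simps)

lemma cojacobi_sum_eq_double:
  fixes d :: "('i::finite \<Rightarrow> 'k::comm_ring_1) \<Rightarrow> ('i \<Rightarrow> 'i \<Rightarrow> 'k)"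
  assumes "alternating2 (d x)"
  shows "(\<Sum>i\<in>UNIV. \<Sum>j\<in>UNIV.
           d x i j * (wedge21 (d (bas i)) (bas j) p q r - wedge21 (d (bas j)) (bas i) p q r))
         = 2 * (\<Sum>i\<in>UNIV. wedge21 (d (bas i)) (\<lambda>j. d x i j) p q r)"
proof -
  let ?W = "\<lambda>i j. wedge21 (d (bas i)) (bas j) p q r"
  let ?S = "\<Sum>i\<in>UNIV. \<Sum>j\<in>UNIV. d x i j * ?W i j"
  have flip: "d x j i * ?W i j = - (d x i j * ?W i j)" for i j
    using assms unfolding alternating2_def by (metis minus_mult_left)
  have "(\<Sum>i\<in>UNIV. \<Sum>j\<in>UNIV. d x i j * ?W j i) = (\<Sum>i\<in>UNIV. \<Sum>j\<in>UNIV. d x j i * ?W i j)"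
    by (rule sum.swap)
  also have "\<dots> = - ?S"
    unfolding flip sum_negf ..
  finally have swapped: "(\<Sum>i\<in>UNIV. \<Sum>j\<in>UNIV. d x i j * ?W j i) = - ?S" .
  have rows: "(\<Sum>j\<in>UNIV. d x i j * ?W i j) = wedge21 (d (bas i)) (\<lambda>j. d x i j) p q r" for i
    by (rule wedge21_sum_bas)
  have "(\<Sum>i\<in>UNIV. \<Sum>j\<in>UNIV. d x i j * (?W i j - ?W j i))
      = ?S - (\<Sum>i\<in>UNIV. \<Sum>j\<in>UNIV. d x i j * ?W j i)"
    by (simp only: right_diff_distrib sum_subtractf)
  also have "\<dots> = 2 * ?S"
    unfolding swapped by simp
  finally show ?thesis
    unfolding rows .
qed

lemma act2_br_f3:
  "act2 br_f3 x w k l = br_f3 x (\<lambda>i. w i l) k + br_f3 x (\<lambda>j. w k j) l"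
  unfolding act2_def br_f3_def sum_f3idx bas_def by (cases k; cases l; simp)

lemma in_L2z_alternating:
  assumes "in_L2z w"
  shows "w i j = - w j i" "w i i = 0"
  using assms unfolding in_L2z_def alternating2_def by blast+

lemma in_L2z_vanish:
  assumes "in_L2z w" "i \<in> {E1, E2, E3}"
  shows "w i j = 0" "w j i = 0"
proof -
  show "w i j = 0"
    using assms unfolding in_L2z_def by blast
  then show "w j i = 0"
    using in_L2z_alternating(1)[OF assms(1), of j i] by simp
qed

lemma delta_f3_linear: "linear_cobracket (delta_f3 A1 A2 A3 w1 w2 w3)"
  unfolding linear_cobracket_def delta_f3_def by (simp add: fun_eq_iff algebra_simps)

lemma delta_f3_centre:
  "delta_f3 A1 A2 A3 w1 w2 w3 (bas Al) = (\<lambda>k l. 0)"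
  "delta_f3 A1 A2 A3 w1 w2 w3 (bas Be) = (\<lambda>k l. 0)"
  "delta_f3 A1 A2 A3 w1 w2 w3 (bas Ga) = (\<lambda>k l. 0)"
  unfolding delta_f3_def by (simp_all add: bas_def)

lemma delta_f3_br: "delta_f3 A1 A2 A3 w1 w2 w3 (br_f3 x y) = (\<lambda>k l. 0)"
  unfolding delta_f3_def br_f3_def by (simp add: fun_eq_iff)

lemma delta_f3_alternating:
  assumes "in_L2z w1" "in_L2z w2" "in_L2z w3"
  shows "alternating2 (delta_f3 A1 A2 A3 w1 w2 w3 x)"
  unfolding alternating2_def
proof (intro conjI allI)
  fix i j
  show "delta_f3 A1 A2 A3 w1 w2 w3 x i j = - delta_f3 A1 A2 A3 w1 w2 w3 x j i"
    unfolding delta_f3_def wedge2_def in_L2z_alternating(1)[OF assms(1), of i j]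
      in_L2z_alternating(1)[OF assms(2), of i j] in_L2z_alternating(1)[OF assms(3), of i j]
    by (simp add: algebra_simps)
  show "delta_f3 A1 A2 A3 w1 w2 w3 x i i = 0"
    unfolding delta_f3_def wedge2_def by (simp add: in_L2z_alternating(2) assms)
qed

context
  fixes A1 A2 A3 :: "f3idx \<Rightarrow> 'k::field_char_0"
    and w1 w2 w3 :: "f3idx \<Rightarrow> f3idx \<Rightarrow> 'k"
  assumes A_in_z: "in_z A1" "in_z A2" "in_z A3"
    and w_in_L2z: "in_L2z w1" "in_L2z w2" "in_L2z w3"
begin

abbreviation (input) "\<delta> \<equiv> delta_f3 A1 A2 A3 w1 w2 w3"

lemma A_vanish_E: "A1 E1 = 0" "A1 E2 = 0" "A1 E3 = 0" "A2 E1 = 0" "A2 E2 = 0" "A2 E3 = 0"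
  "A3 E1 = 0" "A3 E2 = 0" "A3 E3 = 0"
  using A_in_z unfolding in_z_def by auto

lemma w_vanish_E: "w1 E1 j = 0" "w1 E2 j = 0" "w1 E3 j = 0" "w2 E1 j = 0" "w2 E2 j = 0" "w2 E3 j = 0"
  "w3 E1 j = 0" "w3 E2 j = 0" "w3 E3 j = 0"
  "w1 j E1 = 0" "w1 j E2 = 0" "w1 j E3 = 0" "w2 j E1 = 0" "w2 j E2 = 0" "w2 j E3 = 0"
  "w3 j E1 = 0" "w3 j E2 = 0" "w3 j E3 = 0"
  by (simp_all add: in_L2z_vanish[OF w_in_L2z(1)] in_L2z_vanish[OF w_in_L2z(2)]
      in_L2z_vanish[OF w_in_L2z(3)])

lemma delta_f3_row: "\<delta> y E1 l = y E1 * A1 l" "\<delta> y E2 l = y E2 * A2 l" "\<delta> y E3 l = y E3 * A3 l"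
  unfolding delta_f3_def wedge2_def bas_def by (simp_all add: w_vanish_E A_vanish_E)

lemma delta_f3_col: "\<delta> y l E1 = - y E1 * A1 l" "\<delta> y l E2 = - y E2 * A2 l" "\<delta> y l E3 = - y E3 * A3 l"
  unfolding delta_f3_def wedge2_def bas_def by (simp_all add: w_vanish_E A_vanish_E)

lemma cojacobi_sum_delta_f3:
  "(\<Sum>i\<in>UNIV. \<Sum>j\<in>UNIV.
      \<delta> x i j * (wedge21 (\<delta> (bas i)) (bas j) p q r - wedge21 (\<delta> (bas j)) (bas i) p q r))
   = 2 * (x E1 * wedge21 w1 A1 p q r + x E2 * wedge21 w2 A2 p q r + x E3 * wedge21 w3 A3 p q r)"
proof -
  have rows: "(\<lambda>j. \<delta> x E1 j) = (\<lambda>j. x E1 * A1 j)" "(\<lambda>j. \<delta> x E2 j) = (\<lambda>j. x E2 * A2 j)"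
    "(\<lambda>j. \<delta> x E3 j) = (\<lambda>j. x E3 * A3 j)"
    by (simp_all add: delta_f3_row)
  have generators: "\<delta> (bas E1) = (\<lambda>k l. wedge2 (bas E1) A1 k l + w1 k l)"
    "\<delta> (bas E2) = (\<lambda>k l. wedge2 (bas E2) A2 k l + w2 k l)"
    "\<delta> (bas E3) = (\<lambda>k l. wedge2 (bas E3) A3 k l + w3 k l)"
    by (simp_all add: delta_f3_def fun_eq_iff bas_def)
  have zero: "wedge21 (\<lambda>i j. 0) v p q r = 0" for v :: "f3idx \<Rightarrow> 'k"
    by (simp add: wedge21_def)
  show ?thesis
    unfolding cojacobi_sum_eq_double[where d = \<delta>, OF delta_f3_alternating[OF w_in_L2z]]
    unfolding sum_f3idx delta_f3_centre zero
      rows generators wedge21_wedge2_add_same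
    by simp
qed

lemma cojacobi_delta_f3_iff:
  "cojacobi \<delta> \<longleftrightarrow>
   wedge21 w1 A1 = (\<lambda>p q r. 0) \<and> wedge21 w2 A2 = (\<lambda>p q r. 0) \<and> wedge21 w3 A3 = (\<lambda>p q r. 0)"
proof
  assume "cojacobi \<delta>"
  then have "2 * (x E1 * wedge21 w1 A1 p q r + x E2 * wedge21 w2 A2 p q r
      + x E3 * wedge21 w3 A3 p q r) = 0" for x p q r
    unfolding cojacobi_def fun_eq_iff cojacobi_sum_delta_f3 by blast
  then have vanish: "x E1 * wedge21 w1 A1 p q r + x E2 * wedge21 w2 A2 p q r
      + x E3 * wedge21 w3 A3 p q r = 0" for x p q r
    by (metis mult_eq_0_iff zero_neq_numeral)
  show "wedge21 w1 A1 = (\<lambda>p q r. 0) \<and> wedge21 w2 A2 = (\<lambda>p q r. 0) \<and> wedge21 w3 A3 = (\<lambda>p q r. 0)"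
    using vanish[of "bas E1"] vanish[of "bas E2"] vanish[of "bas E3"]
    by (simp add: fun_eq_iff bas_def)
qed (simp add: cojacobi_def fun_eq_iff cojacobi_sum_delta_f3)

definition sign_relations :: bool where
  "sign_relations \<longleftrightarrow>
     A2 Al = A1 Al \<and> A3 Al = - A1 Al \<and> A2 Be = - A1 Be \<and> A3 Be = - A1 Be \<and>
     A2 Ga = - A1 Ga \<and> A3 Ga = A1 Ga"

lemma cocycle_delta_f3_iff: "cocycle br_f3 \<delta> \<longleftrightarrow> sign_relations"
proof
  assume "cocycle br_f3 \<delta>"
  then have symm: "act2 br_f3 x (\<delta> y) k l = act2 br_f3 y (\<delta> x) k l" for x y k l
    unfolding cocycle_def delta_f3_br fun_eq_iff by (metis eq_iff_diff_eq_0)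
  show sign_relations
    using symm[of "bas E1" "bas E2" Al Be] symm[of "bas E1" "bas E2" Al Ga]
      symm[of "bas E2" "bas E3" Be Al] symm[of "bas E2" "bas E3" Be Ga]
      symm[of "bas E3" "bas E1" Ga Al] symm[of "bas E3" "bas E1" Ga Be]
    unfolding sign_relations_def act2_br_f3
    by (simp add: br_f3_def delta_f3_row delta_f3_col bas_def A_vanish_E)
next
  assume sign_relations
  have "act2 br_f3 x (\<delta> y) k l = act2 br_f3 y (\<delta> x) k l" for x y k l
    using \<open>sign_relations\<close> unfolding sign_relations_def act2_br_f3
    by (cases k; cases l; simp add: br_f3_def delta_f3_row delta_f3_col A_vanish_E algebra_simps)
  then show "cocycle br_f3 \<delta>"
    unfolding cocycle_def delta_f3_br fun_eq_iff by simp
qed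

lemma sign_relations_iff:
  "sign_relations \<longleftrightarrow> (\<exists>a b c.
      A1 = (\<lambda>i. a * bas Al i + b * bas Be i + c * bas Ga i) \<and>
      A2 = (\<lambda>i. a * bas Al i - b * bas Be i - c * bas Ga i) \<and>
      A3 = (\<lambda>i. - a * bas Al i - b * bas Be i + c * bas Ga i))"
proof
  assume sign_relations
  then show "\<exists>a b c.
      A1 = (\<lambda>i. a * bas Al i + b * bas Be i + c * bas Ga i) \<and>
      A2 = (\<lambda>i. a * bas Al i - b * bas Be i - c * bas Ga i) \<and>
      A3 = (\<lambda>i. - a * bas Al i - b * bas Be i + c * bas Ga i)"
    unfolding sign_relations_def
    by (intro exI[of _ "A1 Al"] exI[of _ "A1 Be"] exI[of _ "A1 Ga"])
      (simp add: fun_eq_iff all_f3idx bas_def A_vanish_E)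
qed (auto simp: sign_relations_def bas_def)

end

theorem mainTheorem18:
  fixes A1 A2 A3 :: "f3idx \<Rightarrow> 'k::field_char_0"
    and w1 w2 w3 :: "f3idx \<Rightarrow> f3idx \<Rightarrow> 'k"
  assumes "in_z A1" "in_z A2" "in_z A3"
    and "in_L2z w1" "in_L2z w2" "in_L2z w3"
  shows "lie_bialgebra_structure br_f3 (delta_f3 A1 A2 A3 w1 w2 w3) \<longleftrightarrow>
    ((\<exists>a b c.
        A1 = (\<lambda>i. a * bas Al i + b * bas Be i + c * bas Ga i) \<and>
        A2 = (\<lambda>i. a * bas Al i - b * bas Be i - c * bas Ga i) \<and>
        A3 = (\<lambda>i. - a * bas Al i - b * bas Be i + c * bas Ga i)) \<and>
     wedge21 w1 A1 = (\<lambda>p q r. 0) \<and> wedge21 w2 A2 = (\<lambda>p q r. 0) \<and>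
     wedge21 w3 A3 = (\<lambda>p q r. 0))"
  using delta_f3_linear delta_f3_alternating[OF assms(4-6)]
    cojacobi_delta_f3_iff[OF assms] cocycle_delta_f3_iff[OF assms] sign_relations_iff[OF assms]
  unfolding lie_bialgebra_structure_def by blast

end
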